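(* Let $n \ge 0$. If $\beta$ is a (contiguous) subword of $W$ with $|\beta| = |W_n|$ and $\beta \neq W_n$, then $d_0(W_n,\beta) > \frac16$.
   Context: Words are finite strings over $\{0,1\}$; $\alpha(i)$ is the $i$-th letter of $\alpha$ and $|\alpha|$ its length. Define $W_0 = 0$ and $W_{m+1} = W_m W_m 1 W_m$ for $m\ge0$, and let $W$ be the unique infinite word having every $W_m$ as an initial segment. For words $\alpha,\beta$ of equal length with $\alpha$ containing at least one $0$, $$d_0(\alpha,\beta) = \frac{|\{i : \alpha(i)=0 \text{ and } \beta(i)=1\}|}{|\{i : \alpha(i)=0\}|}.$$ *)

theory Defs
  imports Complex_Main
begin

text \<open>Words over {0,1} are lists of naturals (letters 0 and 1); letters indexed from 0.\<close>

fun Wm :: "nat \<Rightarrow> nat list" where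
  "Wm 0 = [0]"
| "Wm (Suc m) = Wm m @ Wm m @ [1] @ Wm m"

text \<open>The infinite word W: its i-th letter is the i-th letter of any W_m long enough.
  Since length (Wm m) = (3^(m+1)-1)/2 > m, the word Wm i has length > i;
  as each Wm m is a prefix of Wm (Suc m), this is the unique infinite word having
  every Wm m as initial segment.\<close>
definition W :: "nat \<Rightarrow> nat" where
  "W i = Wm i ! i"

definition subword_W :: "nat \<Rightarrow> nat \<Rightarrow> nat list" where
  "subword_W k l = map W [k..<k+l]"

definition d0 :: "nat list \<Rightarrow> nat list \<Rightarrow> real" where
  "d0 \<alpha> \<beta> = real (card {i. i < length \<alpha> \<and> \<alpha> ! i = 0 \<and> \<beta> ! i = 1})
              / real (card {i. i < length \<alpha> \<and> \<alpha> ! i = 0})"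

end

theory Submission
  imports Defs
begin

text \<open>
  Let \<open>\<sigma>\<^sub>n\<close> be the substitution \<open>0 \<mapsto> W\<^sub>n\<close>, \<open>1 \<mapsto> 1\<close>. Since \<open>W\<^sub>m\<^sub>+\<^sub>n = \<sigma>\<^sub>n(W\<^sub>m)\<close>, the word \<open>W\<close>
  is a fixed point of \<open>\<sigma>\<^sub>n\<close>, and occurrences of \<open>W\<^sub>n\<close> in \<open>W\<close> are rigid: each is the image of a
  letter \<open>0\<close> of \<open>W\<close>. Write \<open>W\<^sub>n\<^sub>+\<^sub>1 = W\<^sub>n W\<^sub>n 1 W\<^sub>n\<close> and cut a window \<open>\<beta> \<noteq> W\<^sub>n\<^sub>+\<^sub>1\<close> of the same
  length into three windows of length \<open>|W\<^sub>n|\<close> at offsets \<open>0\<close>, \<open>|W\<^sub>n|\<close>, \<open>2|W\<^sub>n| + 1\<close>. If none of them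
  is an occurrence of \<open>W\<^sub>n\<close>, induction bounds each of their numbers of \<open>0\<close>-against-\<open>1\<close> positions
  by \<open>(3\<^sup>n + 3)/6\<close>. Otherwise the blocks around that occurrence force one window to be \<open>W\<^sub>n\<close>
  shifted by one letter against a \<open>1\<close>; as the \<open>1\<close>s of \<open>W\<close> are isolated and \<open>W\<^sub>n\<close> begins and
  ends with \<open>0\<close>, that window alone has \<open>(3\<^sup>n + 1)/2\<close> such positions. Either way \<open>\<beta>\<close> has at
  least \<open>(3\<^sup>n\<^sup>+\<^sup>1 + 3)/6\<close> of them, out of the \<open>3\<^sup>n\<^sup>+\<^sup>1\<close> zeros of \<open>W\<^sub>n\<^sub>+\<^sub>1\<close>.
\<close>

section \<open>The words \<open>W\<^sub>n\<close> and \<open>W\<close>\<close>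

lemma length_Wm_gt: "n < length (Wm n)"
  by (induction n) auto

lemma Wm_not_Nil: "Wm n \<noteq> []"
  using length_Wm_gt[of n] by auto

lemma hd_Wm: "hd (Wm n) = 0"
  by (induction n) (auto simp: Wm_not_Nil)

lemma last_Wm: "last (Wm n) = 0"
  by (induction n) (auto simp: Wm_not_Nil)

lemma Wm_nth_0: "Wm n ! 0 = 0"
  using hd_Wm[of n] Wm_not_Nil[of n] by (simp add: hd_conv_nth)

lemma set_Wm: "set (Wm n) \<subseteq> {0, 1}"
  by (induction n) auto

lemma count_list_Wm_0: "count_list (Wm n) 0 = 3 ^ n"
  by (induction n) auto

lemma count_list_Wm_1: "2 * count_list (Wm n) 1 + 1 = 3 ^ n"
  by (induction n) auto

lemma Wm_prefix: "m \<le> M \<Longrightarrow> \<exists>t. Wm M = Wm m @ t"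
  by (induction M rule: dec_induct) auto

lemma W_eq_nth_Wm:
  assumes "i < length (Wm m)"
  shows "W i = Wm m ! i"
proof -
  obtain t t' where "Wm (max i m) = Wm i @ t" "Wm (max i m) = Wm m @ t'"
    using Wm_prefix[of i "max i m"] Wm_prefix[of m "max i m"] by auto
  then show ?thesis
    using assms length_Wm_gt[of i] by (metis W_def nth_append)
qed

lemma W_0: "W 0 = 0"
  by (simp add: W_def)

lemma W_cases: "W p = 0 \<or> W p = 1"
  using set_Wm[of p] length_Wm_gt[of p] nth_mem[of p "Wm p"] unfolding W_def by blast

lemma length_subword_W [simp]: "length (subword_W k l) = l"
  by (simp add: subword_W_def)

lemma nth_subword_W [simp]: "i < l \<Longrightarrow> subword_W k l ! i = W (k + i)"
  by (simp add: subword_W_def)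

lemma subword_W_add: "subword_W k (a + b) = subword_W k a @ subword_W (k + a) b"
  by (simp add: subword_W_def upt_add_eq_append[of k "k + a" b, simplified add.assoc]
      add.assoc)

lemma subword_W_Suc: "subword_W k (Suc l) = W k # subword_W (Suc k) l"
  by (simp add: subword_W_def upt_conv_Cons del: upt_Suc)

lemma subword_W_Suc_0 [simp]: "subword_W k (Suc 0) = [W k]"
  by (simp add: subword_W_def)

lemma subword_W_0_Suc: "subword_W 0 (Suc j) = subword_W 0 j @ [W j]"
  by (simp add: subword_W_def)

lemma subword_W_0_eq_take_Wm: "l \<le> length (Wm m) \<Longrightarrow> subword_W 0 l = take l (Wm m)"
  by (rule nth_equalityI) (simp_all add: W_eq_nth_Wm)

primrec nonzeros_isolated :: "nat list \<Rightarrow> bool" where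
  "nonzeros_isolated [] \<longleftrightarrow> True"
| "nonzeros_isolated (x # ys) \<longleftrightarrow> nonzeros_isolated ys \<and> (ys \<noteq> [] \<longrightarrow> x = 0 \<or> hd ys = 0)"

lemma nonzeros_isolated_append:
  "nonzeros_isolated (xs @ ys) \<longleftrightarrow> nonzeros_isolated xs \<and> nonzeros_isolated ys \<and>
     (xs \<noteq> [] \<longrightarrow> ys \<noteq> [] \<longrightarrow> last xs = 0 \<or> hd ys = 0)"
  by (induction xs) auto

lemma nonzeros_isolated_nth:
  "nonzeros_isolated xs \<Longrightarrow> Suc i < length xs \<Longrightarrow> xs ! i = 0 \<or> xs ! Suc i = 0"
  by (induction xs arbitrary: i) (auto simp: nth_Cons hd_conv_nth split: nat.split)

lemma nonzeros_isolated_Wm: "nonzeros_isolated (Wm n)"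
  by (induction n) (simp_all add: nonzeros_isolated_append hd_Wm last_Wm Wm_not_Nil)

lemma W_no_11: "W p = 0 \<or> W (Suc p) = 0"
proof -
  have p: "Suc p < length (Wm (Suc p))"
    using length_Wm_gt by blast
  then show ?thesis
    using nonzeros_isolated_nth[OF nonzeros_isolated_Wm p]
      W_eq_nth_Wm[OF p] W_eq_nth_Wm[OF Suc_lessD[OF p]]
    by (simp del: Wm.simps)
qed

section \<open>Substitution and blocks\<close>

definition subst_letter :: "nat \<Rightarrow> nat \<Rightarrow> nat list" where
  "subst_letter n x = (if x = 0 then Wm n else [1])"

definition subst :: "nat \<Rightarrow> nat list \<Rightarrow> nat list" where
  "subst n xs = concat (map (subst_letter n) xs)"

lemma subst_simps [simp]:
  "subst n [] = []"
  "subst n (x # xs) = subst_letter n x @ subst n xs"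
  "subst n (xs @ ys) = subst n xs @ subst n ys"
  by (simp_all add: subst_def)

lemma subst_letter_not_Nil: "subst_letter n x \<noteq> []"
  by (simp add: subst_letter_def Wm_not_Nil)

lemma subst_Wm: "subst n (Wm m) = Wm (m + n)"
  by (induction m) (simp_all add: subst_letter_def)

lemma subst_subst: "subst n (subst m xs) = subst (m + n) xs"
proof (induction xs)
  case (Cons x xs)
  have "subst n (subst_letter m x) = subst_letter (m + n) x"
    by (simp add: subst_letter_def subst_Wm)
  with Cons show ?case by simp
qed simp

text \<open>Position in \<open>W\<close> where the image under \<open>\<sigma>\<^sub>n\<close> of the \<open>j\<close>-th letter of \<open>W\<close> begins, \<open>W\<close>
  being a fixed point of \<open>\<sigma>\<^sub>n\<close>.\<close>

definition block_start :: "nat \<Rightarrow> nat \<Rightarrow> nat" where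
  "block_start n j = length (subst n (subword_W 0 j))"

lemma subword_W_0_block_start: "subword_W 0 (block_start n j) = subst n (subword_W 0 j)"
proof -
  have j: "j \<le> length (Wm j)"
    using length_Wm_gt[of j] by simp
  have split: "Wm (j + n) = subst n (subword_W 0 j) @ subst n (drop j (Wm j))"
    using subword_W_0_eq_take_Wm[OF j] by (simp flip: subst_Wm subst_simps(3))
  then have "block_start n j \<le> length (Wm (j + n))"
    by (simp add: block_start_def)
  then have "subword_W 0 (block_start n j) = take (block_start n j) (Wm (j + n))"
    by (rule subword_W_0_eq_take_Wm)
  with split show ?thesis
    by (simp add: block_start_def)
qed

lemma block_start_0 [simp]: "block_start n 0 = 0"
  by (simp add: block_start_def subword_W_def)

lemma block_start_Suc: "block_start n (Suc j) = block_start n j + length (subst_letter n (W j))"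
  by (simp add: block_start_def subword_W_0_Suc)

lemma block_start_Suc_if:
  "block_start n (Suc j) = block_start n j + (if W j = 0 then length (Wm n) else 1)"
  by (simp add: block_start_Suc subst_letter_def)

lemma W_block_start_add:
  assumes "r < length (subst_letter n (W j))"
  shows "W (block_start n j + r) = subst_letter n (W j) ! r"
proof -
  have "subword_W 0 (block_start n (Suc j)) = subst n (subword_W 0 j) @ subst_letter n (W j)"
    by (simp add: subword_W_0_block_start subword_W_0_Suc)
  then have "subword_W 0 (block_start n (Suc j)) ! (block_start n j + r) = subst_letter n (W j) ! r"
    by (simp add: block_start_def nth_append)
  with assms show ?thesis
    by (simp add: block_start_Suc)
qed

lemma W_block_start: "W (block_start n j) = W j"
  using W_block_start_add[of 0 n j] W_cases[of j]
  by (auto simp: subst_letter_def Wm_nth_0 Wm_not_Nil)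

lemma strict_mono_block_start: "strict_mono (block_start n)"
  by (simp add: strict_mono_Suc_iff block_start_Suc subst_letter_not_Nil)

lemma block_start_level_0: "block_start 0 j = j"
  by (induction j) (simp_all add: block_start_Suc subst_letter_def)

lemma block_start_block_start: "block_start n (block_start m i) = block_start (m + n) i"
  by (simp only: block_start_def[of n] subword_W_0_block_start subst_subst
      block_start_def[of "m + n"])

lemma ex_interval_strict_mono:
  fixes f :: "nat \<Rightarrow> nat"
  assumes "strict_mono f" "f 0 = 0"
  shows "\<exists>i. f i \<le> p \<and> p < f (Suc i)"
proof (induction p)
  case 0
  show ?case
    using assms strict_monoD[OF assms(1), of 0 1] by auto
next
  case (Suc p)
  then obtain i where "f i \<le> p" "p < f (Suc i)"
    by blast
  then show ?case
    using strict_monoD[OF assms(1), of "Suc i" "Suc (Suc i)"]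
    by (cases "Suc p = f (Suc i)") (auto intro: le_SucI)
qed

section \<open>Occurrences of \<open>W\<^sub>n\<close> in \<open>W\<close>\<close>

definition occurs_at :: "nat \<Rightarrow> nat \<Rightarrow> bool" where
  "occurs_at n q \<longleftrightarrow> subword_W q (length (Wm n)) = Wm n"

lemma W_occurs_at: "occurs_at n q \<Longrightarrow> W q = 0"
  using nth_subword_W[of 0 "length (Wm n)" q] Wm_not_Nil[of n]
  by (simp add: occurs_at_def Wm_nth_0)

lemma occurs_at_block_start_iff: "occurs_at n (block_start n j) \<longleftrightarrow> W j = 0"
proof
  assume "W j = 0"
  then show "occurs_at n (block_start n j)"
    unfolding occurs_at_def
    by (intro nth_equalityI) (simp_all add: W_block_start_add subst_letter_def)
qed (metis W_occurs_at W_block_start)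

lemma level1_block_zero:
  assumes "W i = 0"
  shows "W (block_start 1 i) = 0" "W (block_start 1 i + 1) = 0" "W (block_start 1 i + 2) = 1"
    "W (block_start 1 i + 3) = 0" "block_start 1 (Suc i) = block_start 1 i + 4"
  using assms W_block_start_add[of 0 1 i] W_block_start_add[of 1 1 i] W_block_start_add[of 2 1 i]
    W_block_start_add[of 3 1 i] block_start_Suc[of 1 i]
  by (simp_all add: subst_letter_def)

lemma level1_block_one:
  assumes "W i \<noteq> 0"
  shows "W (block_start 1 i) = 1" "block_start 1 (Suc i) = block_start 1 i + 1"
  using assms W_block_start_add[of 0 1 i] block_start_Suc[of 1 i]
  by (simp_all add: subst_letter_def)

lemma level1_position_cases:
  obtains (one) i where "W i \<noteq> 0" "p = block_start 1 i"
  | (zero) i r where "W i = 0" "r < 4" "p = block_start 1 i + r"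
proof -
  obtain i where i: "block_start 1 i \<le> p" "p < block_start 1 (Suc i)"
    using ex_interval_strict_mono[OF strict_mono_block_start block_start_0] by blast
  show thesis
  proof (cases "W i = 0")
    case True
    with i show thesis
      using zero[of i "p - block_start 1 i"] level1_block_zero(5)[of i] by simp
  next
    case False
    with i show thesis
      using one[of i] level1_block_one(2)[of i] by simp
  qed
qed

lemma W_no_0000:
  assumes "W p = 0" "W (p + 1) = 0" "W (p + 2) = 0"
  shows "W (p + 3) = 1"
proof (cases p rule: level1_position_cases)
  case (one i)
  then show ?thesis
    using assms(1) level1_block_one(1)[of i] by simp
next
  case (zero i r)
  then have "r = 3"
    using assms level1_block_zero[of i] by (auto simp: less_Suc_eq numeral_eq_Suc)
  with zero have "W (Suc i) = 0"
    using assms(2) level1_block_zero(5)[of i] W_block_start[of 1 "Suc i"] by (simp add: add.commute)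
  with zero \<open>r = 3\<close> show ?thesis
    using level1_block_zero(5)[of i] level1_block_zero(3)[of "Suc i"] by simp
qed

lemma level1_block_start_of_001:
  assumes "W j = 0" "W (j + 1) = 0" "W (j + 2) = 1"
  shows "\<exists>i. W i = 0 \<and> j = block_start 1 i"
proof (cases j rule: level1_position_cases)
  case (one i)
  then show ?thesis
    using assms(1) level1_block_one(1)[of i] by simp
next
  case (zero i r)
  have "r \<noteq> 3"
  proof
    assume "r = 3"
    with zero have "W (Suc i) = 0"
      using assms(2) level1_block_zero(5)[of i] W_block_start[of 1 "Suc i"] by (simp add: add.commute)
    with zero \<open>r = 3\<close> show False
      using assms(3) level1_block_zero(5)[of i] level1_block_zero(2)[of "Suc i"]
      by (simp add: add.commute)
  qed
  with zero have "r = 0"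
    using assms level1_block_zero[of i] by (auto simp: less_Suc_eq numeral_eq_Suc)
  with zero show ?thesis
    by auto
qed

lemma subword_W_length_Wm_Suc:
  "subword_W q (length (Wm (Suc n))) =
     subword_W q (length (Wm n)) @ subword_W (q + length (Wm n)) (length (Wm n))
     @ [W (q + 2 * length (Wm n))] @ subword_W (q + 2 * length (Wm n) + 1) (length (Wm n))"
proof -
  have "length (Wm (Suc n)) = length (Wm n) + (length (Wm n) + (1 + length (Wm n)))"
    by simp
  then show ?thesis
    by (simp only: subword_W_add) (simp add: mult_2 add.assoc)
qed

lemma occurs_at_Suc_iff:
  "occurs_at (Suc n) q \<longleftrightarrow> occurs_at n q \<and> occurs_at n (q + length (Wm n))
     \<and> W (q + 2 * length (Wm n)) = 1 \<and> occurs_at n (q + 2 * length (Wm n) + 1)"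
  unfolding occurs_at_def subword_W_length_Wm_Suc by (auto simp del: Wm.simps(1))

text \<open>An occurrence of \<open>W\<^sub>n\<^sub>+\<^sub>1 = W\<^sub>n W\<^sub>n 1 W\<^sub>n\<close> lies over a factor \<open>001\<close> of \<open>W\<close>, and at level 1
  such a factor only starts at the beginning of a block \<open>\<sigma>\<^sub>1(0) = 0010\<close>.\<close>

lemma occurs_at_imp_block_start: "occurs_at n q \<Longrightarrow> \<exists>j. W j = 0 \<and> q = block_start n j"
proof (induction n arbitrary: q)
  case 0
  then show ?case
    by (auto simp: occurs_at_def subword_W_def block_start_level_0)
next
  case (Suc n)
  let ?L = "length (Wm n)"
  obtain j where j: "W j = 0" "q = block_start n j"
    using Suc occurs_at_Suc_iff by blast
  have next1: "block_start n (Suc j) = q + ?L"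
    using j by (simp add: block_start_Suc_if)
  then have "W (Suc j) = 0"
    using Suc.prems W_occurs_at W_block_start occurs_at_Suc_iff by metis
  then have next2: "block_start n (Suc (Suc j)) = q + 2 * ?L"
    using next1 by (simp add: block_start_Suc_if)
  then have "W (Suc (Suc j)) = 1"
    using Suc.prems W_block_start occurs_at_Suc_iff by metis
  then obtain i where "W i = 0" "j = block_start 1 i"
    using level1_block_start_of_001 j(1) \<open>W (Suc j) = 0\<close> by auto
  with j show ?case
    using block_start_block_start[of n 1 i] by auto
qed

lemma occurs_at_next:
  assumes "occurs_at n q"
  shows "occurs_at n (q + length (Wm n)) \<or> W (q + length (Wm n)) = 1 \<and> occurs_at n (q + length (Wm n) + 1)"
proof -
  obtain j where j: "W j = 0" "q = block_start n j"
    using occurs_at_imp_block_start[OF assms] by blast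
  then have next1: "block_start n (Suc j) = q + length (Wm n)"
    by (simp add: block_start_Suc_if)
  show ?thesis
  proof (cases "W (Suc j) = 0")
    case True
    then show ?thesis
      using next1 occurs_at_block_start_iff[of n "Suc j"] by simp
  next
    case False
    then have "W (Suc j) = 1" "W (Suc (Suc j)) = 0"
      using W_cases[of "Suc j"] W_no_11[of "Suc j"] by auto
    moreover have "block_start n (Suc (Suc j)) = q + length (Wm n) + 1"
      using next1 False by (simp add: block_start_Suc_if)
    ultimately show ?thesis
      using next1 W_block_start[of n "Suc j"] occurs_at_block_start_iff[of n "Suc (Suc j)"] by simp
  qed
qed

lemma occurs_at_prev:
  assumes "occurs_at n p" "0 < p"
  obtains q where "occurs_at n q" "p = q + length (Wm n)"
  | q where "occurs_at n q" "p = q + length (Wm n) + 1" "W (q + length (Wm n)) = 1"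
proof -
  obtain j where j: "W j = 0" "p = block_start n j"
    using occurs_at_imp_block_start[OF assms(1)] by blast
  then obtain i where i: "j = Suc i"
    using assms(2) by (cases j) auto
  show thesis
  proof (cases "W i = 0")
    case True
    then show thesis
      using that(1)[of "block_start n i"] i j occurs_at_block_start_iff[of n i]
      by (simp add: block_start_Suc_if)
  next
    case False
    then have "W i = 1"
      using W_cases[of i] by simp
    then have "i \<noteq> 0"
      using W_0 by (metis zero_neq_one)
    then obtain h where h: "i = Suc h"
      using not0_implies_Suc by blast
    then have "W h = 0"
      using W_no_11[of h] \<open>W i = 1\<close> by auto
    then have "block_start n i = block_start n h + length (Wm n)"
      using h by (simp add: block_start_Suc_if)
    moreover have "p = block_start n i + 1"
      using i j False by (simp add: block_start_Suc_if)
    moreover have "occurs_at n (block_start n h)"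
      using \<open>W h = 0\<close> occurs_at_block_start_iff by blast
    ultimately show thesis
      using that(2)[of "block_start n h"] \<open>W i = 1\<close> W_block_start[of n i] by simp
  qed
qed

lemma W_after_three_occurrences:
  assumes "occurs_at n q" "occurs_at n (q + length (Wm n))" "occurs_at n (q + 2 * length (Wm n))"
  shows "W (q + 3 * length (Wm n)) = 1"
proof -
  let ?L = "length (Wm n)"
  obtain j where j: "W j = 0" "q = block_start n j"
    using occurs_at_imp_block_start[OF assms(1)] by blast
  then have 1: "block_start n (j + 1) = q + ?L"
    by (simp add: block_start_Suc_if)
  then have "W (j + 1) = 0"
    using assms(2) W_occurs_at W_block_start by metis
  then have 2: "block_start n (j + 2) = q + 2 * ?L"
    using 1 by (simp add: block_start_Suc_if)
  then have "W (j + 2) = 0"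
    using assms(3) W_occurs_at W_block_start by metis
  then have "block_start n (j + 3) = q + 3 * ?L" "W (j + 3) = 1"
    using 2 j(1) \<open>W (j + 1) = 0\<close> W_no_0000 by (simp_all add: block_start_Suc_if numeral_eq_Suc)
  then show ?thesis
    using W_block_start by metis
qed

section \<open>Counting positions with \<open>0\<close> against \<open>1\<close>\<close>

definition count01 :: "nat list \<Rightarrow> nat list \<Rightarrow> nat" where
  "count01 xs ys = length (filter (\<lambda>(x, y). x = 0 \<and> y = 1) (zip xs ys))"

lemma count01_simps [simp]:
  "count01 [] ys = 0"
  "count01 (x # xs) (y # ys) = (if x = 0 \<and> y = 1 then 1 else 0) + count01 xs ys"
  by (simp_all add: count01_def)

lemma count_list_eq_card: "count_list xs y = card {i. i < length xs \<and> xs ! i = y}"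
  unfolding count_list_eq_length_filter length_filter_conv_card by (metis (no_types))

lemma count01_eq_card:
  assumes "length ys = length xs"
  shows "count01 xs ys = card {i. i < length xs \<and> xs ! i = 0 \<and> ys ! i = 1}"
proof -
  have "{i. i < length (zip xs ys) \<and> (\<lambda>(x, y). x = 0 \<and> y = 1) (zip xs ys ! i)}
      = {i. i < length xs \<and> xs ! i = 0 \<and> ys ! i = 1}"
    using assms by auto
  then show ?thesis
    by (simp add: count01_def length_filter_conv_card)
qed

lemma count01_append:
  "length xs = length ys \<Longrightarrow> count01 (xs @ xs') (ys @ ys') = count01 xs ys + count01 xs' ys'"
  by (simp add: count01_def)

lemma count01_take_length: "count01 xs (take (length xs) ys) = count01 xs ys"
proof -
  have "zip xs (take (length xs) ys) = take (length xs) (zip xs ys)"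
    by (simp add: take_zip)
  then show ?thesis
    by (simp add: count01_def)
qed

lemma count01_shift_left:
  "nonzeros_isolated (x # ys) \<Longrightarrow>
     count01 (x # ys) (ys @ [e]) = count_list ys 1 + (if last (x # ys) = 0 \<and> e = 1 then 1 else 0)"
  by (induction ys arbitrary: x) auto

lemma count01_shift_right:
  "nonzeros_isolated zs \<Longrightarrow>
     count01 zs (e # zs) = (if zs \<noteq> [] \<and> hd zs = 0 \<and> e = 1 then 1 else 0) + count_list (butlast zs) 1"
  by (induction zs arbitrary: e) (auto simp: neq_Nil_conv)

definition count01_at :: "nat \<Rightarrow> nat \<Rightarrow> nat" where
  "count01_at n k = count01 (Wm n) (subword_W k (length (Wm n)))"

lemma count01_at_Suc:
  "count01_at (Suc n) k = count01_at n k + count01_at n (k + length (Wm n))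
     + count01_at n (k + 2 * length (Wm n) + 1)"
proof -
  let ?L = "length (Wm n)"
  have "count01_at (Suc n) k = count01 (Wm n @ Wm n @ [1] @ Wm n)
     (subword_W k ?L @ subword_W (k + ?L) ?L @ [W (k + 2 * ?L)] @ subword_W (k + 2 * ?L + 1) ?L)"
    unfolding count01_at_def subword_W_length_Wm_Suc by simp
  then show ?thesis
    by (simp add: count01_append count01_at_def)
qed

lemma count01_at_shifted_occurrence_left:
  assumes "occurs_at n q" "W (q + length (Wm n)) = 1"
  shows "count01_at n (Suc q) = count_list (Wm n) 1 + 1"
proof -
  let ?A = "Wm n"
  have A: "?A = 0 # tl ?A"
    using hd_Wm[of n] Wm_not_Nil[of n] by (cases ?A) auto
  have "W q # subword_W (Suc q) (length ?A) = ?A @ [1]"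
    using assms subword_W_add[of q "length ?A" 1]
    by (simp add: occurs_at_def flip: subword_W_Suc)
  then have "subword_W (Suc q) (length ?A) = tl ?A @ [1]"
    using A by (metis list.sel(3) tl_append2 Wm_not_Nil)
  moreover have "count01 (0 # tl ?A) (tl ?A @ [1]) = count_list (tl ?A) 1 + 1"
    using count01_shift_left[of 0 "tl ?A" 1] nonzeros_isolated_Wm[of n] A last_Wm[of n] by simp
  ultimately show ?thesis
    using A by (metis count01_at_def count_list.simps(2) zero_neq_one)
qed

lemma count01_at_shifted_occurrence_right:
  assumes "occurs_at n (Suc q)"
  shows "count01_at n q = count_list (Wm n) 1 + (if W q = 1 then 1 else 0)"
proof -
  let ?A = "Wm n"
  have A: "?A = butlast ?A @ [0]"
    using last_Wm[of n] Wm_not_Nil[of n] by (metis append_butlast_last_id)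
  have "subword_W q (Suc (length ?A)) = W q # ?A"
    using assms by (simp add: occurs_at_def subword_W_Suc)
  then have "subword_W q (length ?A) = take (length ?A) (W q # ?A)"
    using subword_W_add[of q "length ?A" 1] by (metis append_eq_conv_conj length_subword_W Suc_eq_plus1)
  then have "count01_at n q = count01 ?A (W q # ?A)"
    by (simp add: count01_at_def count01_take_length)
  also have "\<dots> = (if W q = 1 then 1 else 0) + count_list (butlast ?A) 1"
    using count01_shift_right[OF nonzeros_isolated_Wm] Wm_not_Nil[of n] hd_Wm[of n] by simp
  also have "count_list (butlast ?A) 1 = count_list ?A 1"
    using A by (metis count_list_append count_list.simps add_0_right zero_neq_one)
  finally show ?thesis
    by simp
qed

lemma count01_at_after_occurrence:
  assumes "occurs_at n q" "\<not> occurs_at n (q + length (Wm n))"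
  shows "count01_at n (q + length (Wm n)) = count_list (Wm n) 1 + 1"
  using occurs_at_next[OF assms(1)] assms(2) count01_at_shifted_occurrence_right[of n "q + length (Wm n)"]
  by simp

lemma count01_at_after_two_occurrences:
  assumes "occurs_at n q" "occurs_at n (q + length (Wm n))"
    and "\<not> (W (q + 2 * length (Wm n)) = 1 \<and> occurs_at n (q + 2 * length (Wm n) + 1))"
  shows "count01_at n (q + 2 * length (Wm n) + 1) = count_list (Wm n) 1 + 1"
proof -
  let ?L = "length (Wm n)"
  have "q + ?L + ?L = q + 2 * ?L"
    by simp
  then have "occurs_at n (q + 2 * ?L)"
    using occurs_at_next[OF assms(2)] assms(3) by metis
  moreover have "W (q + 2 * ?L + ?L) = 1"
    using W_after_three_occurrences[OF assms(1,2) calculation] by (simp add: algebra_simps)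
  ultimately show ?thesis
    using count01_at_shifted_occurrence_left by simp
qed

lemma count01_at_before_occurrence:
  assumes "occurs_at n (q + length (Wm n))" "\<not> occurs_at n q"
  shows "count01_at n q = count_list (Wm n) 1 + 1"
proof -
  have "0 < q + length (Wm n)"
    using Wm_not_Nil[of n] by simp
  with assms(1) show ?thesis
  proof (cases rule: occurs_at_prev)
    case (1 q')
    with assms(2) show ?thesis
      by simp
  next
    case (2 q')
    then have "q = Suc q'"
      by simp
    with 2 show ?thesis
      using count01_at_shifted_occurrence_left by simp
  qed
qed

lemma count01_at_before_shifted_occurrence:
  assumes "occurs_at n (q + length (Wm n) + 1)" "\<not> occurs_at n q"
  shows "count_list (Wm n) 1 \<le> count01_at n q"
proof -
  have "0 < q + length (Wm n) + 1"
    by simp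
  with assms(1) show ?thesis
  proof (cases rule: occurs_at_prev)
    case (1 q')
    then have "q' = Suc q"
      by simp
    with 1 show ?thesis
      using count01_at_shifted_occurrence_right by simp
  next
    case (2 q')
    with assms(2) show ?thesis
      by simp
  qed
qed

lemma count01_at_Suc_of_occurrence:
  assumes "\<not> occurs_at (Suc n) k" "occurs_at n k"
  shows "count_list (Wm n) 1 + 1 \<le> count01_at (Suc n) k"
proof (cases "occurs_at n (k + length (Wm n))")
  case True
  with assms have "\<not> (W (k + 2 * length (Wm n)) = 1 \<and> occurs_at n (k + 2 * length (Wm n) + 1))"
    using occurs_at_Suc_iff by blast
  with assms(2) True show ?thesis
    using count01_at_after_two_occurrences count01_at_Suc by simp
next
  case False
  with assms(2) show ?thesis
    using count01_at_after_occurrence count01_at_Suc by simp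
qed

lemma count01_at_lower_bound: "\<not> occurs_at n k \<Longrightarrow> 3 ^ n + 3 \<le> 6 * count01_at n k"
proof (induction n arbitrary: k)
  case 0
  then have "W k = 1"
    using W_cases[of k] by (simp add: occurs_at_def)
  then show ?case
    by (simp add: count01_at_def)
next
  case (Suc n)
  let ?L = "length (Wm n)" and ?h = "count_list (Wm n) 1"
  let ?c1 = "count01_at n k" and ?c2 = "count01_at n (k + ?L)" and ?c3 = "count01_at n (k + 2 * ?L + 1)"
  show ?case
  proof (cases "occurs_at n k \<or> occurs_at n (k + ?L) \<or> occurs_at n (k + 2 * ?L + 1)")
    case True
    have "?h + 1 \<le> ?c1 + ?c2 + ?c3"
    proof (cases "occurs_at n k")
      case True
      with Suc.prems show ?thesis
        using count01_at_Suc_of_occurrence count01_at_Suc by simp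
    next
      case False
      have "?h + 1 \<le> ?c1" if "occurs_at n (k + ?L)"
        using count01_at_before_occurrence[OF that False] by simp
      moreover have "?h + 1 \<le> ?c1 + ?c2" if "occurs_at n (k + ?L + ?L + 1)"
        using count01_at_before_shifted_occurrence[OF that] Suc.IH[OF False] False that
          count01_at_before_occurrence by force
      ultimately show ?thesis
        using True False by (auto simp: mult_2 add.assoc)
    qed
    moreover have "3 ^ Suc n + 3 = 6 * (?h + 1)"
      using count_list_Wm_1[of n] by simp
    ultimately show ?thesis
      unfolding count01_at_Suc by simp
  next
    case False
    then show ?thesis
      using Suc.IH[of k] Suc.IH[of "k + ?L"] Suc.IH[of "k + 2 * ?L + 1"]
      unfolding count01_at_Suc by simp
  qed
qed

theorem lemma2:
  fixes n k :: nat
  assumes "subword_W k (length (Wm n)) \<noteq> Wm n"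
  shows "d0 (Wm n) (subword_W k (length (Wm n))) > 1/6"
proof -
  have zeros: "card {i. i < length (Wm n) \<and> Wm n ! i = 0} = 3 ^ n"
    using count_list_Wm_0[of n] by (simp add: count_list_eq_card)
  have "3 ^ n + 3 \<le> 6 * count01_at n k"
    using assms count01_at_lower_bound by (simp add: occurs_at_def)
  then have "real (3 ^ n) < 6 * real (count01_at n k)"
    by linarith
  then show ?thesis
    unfolding d0_def zeros count01_at_def count01_eq_card[OF length_subword_W, symmetric]
    by (simp add: less_divide_eq)
qed

end
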